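(* Let $\{X_1,X_2,\dots\}$ be a random dense countable subset of $(0,1)$. Suppose that on the same probability space there are random variables $Y_1,Y_2,\dots$ with values in $(0,1)$ such that: - $\{Y_1,Y_2,\dots\}=\{X_1,X_2,\dots\}$ a.s.; - $Y_{2k-1}<\tfrac12$ and $Y_{2k}\ge\tfrac12$ a.s. for all $k$; - the sequence $(Y_2,Y_4,\dots)$ is independent of $(Y_1,Y_3,\dots)$. Suppose moreover that $\Pr(X_1<\tfrac12)>0$. Then for almost all $x_1\in(0,\tfrac12)$ with respect to the distribution of $X_1$, the conditional joint distribution of $(Y_2,Y_4,\dots)$ given $X_1=x_1$ is absolutely continuous with respect to the unconditional joint distribution of $(Y_2,Y_4,\dots)$.
   Context: A random dense countable subset of $(0,1)$ is given by random variables $X_1,X_2,\dots:\Omega\to(0,1)$ such that $\{X_1(\omega),X_2(\omega),\dots\}$ is dense in $(0,1)$ for a.e. $\omega$. *)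

theory Defs
  imports "HOL-Probability.Probability"
begin

abbreviation seq_space :: "(nat \<Rightarrow> real) measure" where
  "seq_space \<equiv> Pi\<^sub>M UNIV (\<lambda>_. borel)"

text \<open>K is a (regular) version of the conditional distribution of Z given X = x
  under M: a probability kernel from borel to N such that
  P(X \<in> A, Z \<in> B) = integral over A of K x B with respect to the law of X.\<close>
definition cond_distr_kernel ::
  "'a measure \<Rightarrow> ('a \<Rightarrow> real) \<Rightarrow> 'b measure \<Rightarrow> ('a \<Rightarrow> 'b) \<Rightarrow> (real \<Rightarrow> 'b measure) \<Rightarrow> bool" where
  "cond_distr_kernel M X N Z K \<longleftrightarrow>
     K \<in> borel \<rightarrow>\<^sub>M prob_algebra N \<and>
     (\<forall>A \<in> sets borel. \<forall>B \<in> sets N.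
        emeasure M {\<omega> \<in> space M. X \<omega> \<in> A \<and> Z \<omega> \<in> B}
          = (\<integral>\<^sup>+ x. indicator A x * emeasure (K x) B \<partial>(distr M borel X)))"

end

theory Submission
  imports Defs
begin

text \<open>
  Write W for the sequence of odd-indexed terms Y (2 k + 1). On the event X 0 < 1/2 the point
  X 0 is one of the even-indexed terms Y (2 j), because the odd-indexed ones are at least 1/2.
  By independence each pair (Y (2 j), W) has the product law of Y (2 j) and W, so the joint law
  of (X 0, W) on that event is absolutely continuous with respect to \<mu> \<otimes> law W, where \<mu> is a
  probability measure dominating the laws of all Y (2 j) (a geometric mixture of them).
  Let f be the Radon-Nikodym density and F x the integral of f (x, -) against law W. The
  disintegration identity gives F x \<cdot> K x = f (x, -) \<cdot> law W on each set of a countable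
  \<inter>-stable generator for almost every x, hence as measures; so K x is absolutely continuous
  with respect to law W wherever 0 < F x < \<infinity>, which holds for almost every x in the event.
\<close>

lemma countable_Int_stable_generator_borel:
  obtains G :: "'a::second_countable_topology set set"
  where "countable G" "Int_stable G" "UNIV \<in> G" "sets borel = sigma_sets UNIV G"
proof -
  obtain B :: "'a set set" where B: "countable B" "topological_basis B"
    using ex_countable_basis by blast
  define G where "G = Inter ` {F. finite F \<and> F \<subseteq> B}"
  have "countable G"
    unfolding G_def by (intro countable_image countable_Collect_finite_subset B)
  moreover have "Int_stable G"
    unfolding Int_stable_def G_def
  proof safe
    fix F F' assume "F \<subseteq> B" "finite F" "F' \<subseteq> B" "finite F'"
    then show "\<Inter>F \<inter> \<Inter>F' \<in> Inter ` {F. finite F \<and> F \<subseteq> B}"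
      by (intro image_eqI[of _ _ "F \<union> F'"]) auto
  qed
  moreover have "UNIV \<in> G"
    unfolding G_def by (intro image_eqI[of _ _ "{}"]) auto
  moreover have "sets borel = sigma_sets UNIV G"
  proof
    have "G \<subseteq> sets borel"
      using topological_basis_open[OF B(2)] by (auto simp: G_def intro!: borel_open)
    then show "sigma_sets UNIV G \<subseteq> sets borel"
      by (metis sets.sigma_sets_subset space_borel)
    have "B \<subseteq> G" unfolding G_def by (auto intro!: image_eqI[of _ _ "{_}"])
    then show "sets borel \<subseteq> sigma_sets UNIV G"
      unfolding borel_eq_countable_basis[OF B] by (simp add: sigma_sets_mono')
  qed
  ultimately show ?thesis by (rule that)
qed

lemma absolutely_continuousI_density_generator:
  fixes \<kappa> \<nu> :: "'b measure"
  assumes G: "Int_stable G" "space \<nu> \<in> G" "sets \<nu> = sigma_sets (space \<nu>) G"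
    and \<kappa>: "finite_measure \<kappa>" "sets \<kappa> = sets \<nu>"
    and g: "g \<in> borel_measurable \<nu>" and c: "0 < c" "c \<noteq> \<infinity>"
    and eq: "\<And>B. B \<in> G \<Longrightarrow> c * emeasure \<kappa> B = (\<integral>\<^sup>+w. g w * indicator B w \<partial>\<nu>)"
  shows "absolutely_continuous \<nu> \<kappa>"
  unfolding absolutely_continuous_def
proof
  have space_\<kappa>: "space \<kappa> = space \<nu>"
    using \<kappa>(2) by (rule sets_eq_imp_space_eq)
  have scaled: "emeasure (density \<kappa> (\<lambda>_. c)) B = c * emeasure \<kappa> B" if "B \<in> sets \<nu>" for B
    using that \<kappa>(2) by (simp add: emeasure_density nn_integral_cmult_indicator)
  have scaled_eq_density: "density \<kappa> (\<lambda>_. c) = density \<nu> g"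
  proof (rule measure_eqI_generator_eq[where \<Omega>="space \<nu>" and E=G and A="\<lambda>_. space \<nu>"])
    show "G \<subseteq> Pow (space \<nu>)"
      using G(3) sets.space_closed[of \<nu>] sigma_sets.Basic by blast
    show "emeasure (density \<kappa> (\<lambda>_. c)) B = emeasure (density \<nu> g) B" if "B \<in> G" for B
      using that G(3) g by (simp add: scaled eq emeasure_density)
    show "emeasure (density \<kappa> (\<lambda>_. c)) (space \<nu>) \<noteq> \<infinity>"
      using c finite_measure.emeasure_finite[OF \<kappa>(1), of "space \<kappa>"]
      by (simp add: scaled space_\<kappa> ennreal_mult_eq_top_iff)
  qed (use G \<kappa>(2) in auto)
  fix B assume B: "B \<in> null_sets \<nu>"
  then have "c * emeasure \<kappa> B = emeasure (density \<kappa> (\<lambda>_. c)) B"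
    using null_setsD2[OF B] by (simp add: scaled)
  also have "\<dots> = emeasure (density \<nu> g) B"
    by (simp add: scaled_eq_density)
  also have "\<dots> = 0"
    using absolutely_continuousI_density[OF g] B by (auto simp: absolutely_continuous_def)
  finally show "B \<in> null_sets \<kappa>"
    using B c \<kappa>(2) by auto
qed

lemma ex_dominating_prob_space:
  fixes \<mu>s :: "nat \<Rightarrow> 'a measure"
  assumes "\<And>i. prob_space (\<mu>s i)" and "\<And>i. sets (\<mu>s i) = sets N"
  obtains \<mu> where "prob_space \<mu>" "sets \<mu> = sets N" "\<And>i. absolutely_continuous \<mu> (\<mu>s i)"
proof
  define p where "p = geometric_pmf (1/2)"
  have support: "set_pmf p = UNIV"
    unfolding p_def by (rule set_pmf_geometric) auto
  have p_prob: "measure_pmf p \<in> space (prob_algebra (measure_pmf p))"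
    by (simp add: space_prob_algebra prob_space_measure_pmf)
  have \<mu>s_meas: "\<mu>s \<in> measure_pmf p \<rightarrow>\<^sub>M prob_algebra N"
    using assms by (simp add: space_prob_algebra)
  show "prob_space (measure_pmf p \<bind> \<mu>s)"
    by (rule prob_space_bind'[OF p_prob \<mu>s_meas])
  show "sets (measure_pmf p \<bind> \<mu>s) = sets N"
    by (rule sets_bind'[OF p_prob \<mu>s_meas])
  show "absolutely_continuous (measure_pmf p \<bind> \<mu>s) (\<mu>s i)" for i
    unfolding absolutely_continuous_def
  proof
    fix A assume "A \<in> null_sets (measure_pmf p \<bind> \<mu>s)"
    then have A: "A \<in> sets N" and "emeasure (measure_pmf p \<bind> \<mu>s) A = 0"
      using sets_bind'[OF p_prob \<mu>s_meas] by auto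
    then have "(\<integral>\<^sup>+j. emeasure (\<mu>s j) A \<partial>measure_pmf p) = 0"
      using measurable_prob_algebraD[OF \<mu>s_meas] by (simp add: emeasure_bind)
    then have "AE j in measure_pmf p. emeasure (\<mu>s j) A = 0"
      by (simp add: nn_integral_0_iff_AE)
    then have "emeasure (\<mu>s i) A = 0"
      by (simp add: AE_measure_pmf_iff support)
    then show "A \<in> null_sets (\<mu>s i)"
      using A assms(2) by auto
  qed
qed

lemma absolutely_continuous_pair_measure_fst:
  assumes "sigma_finite_measure \<nu>"
    and "absolutely_continuous \<mu> \<mu>'" and "sets \<mu>' = sets \<mu>"
  shows "absolutely_continuous (\<mu> \<Otimes>\<^sub>M \<nu>) (\<mu>' \<Otimes>\<^sub>M \<nu>)"
  unfolding absolutely_continuous_def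
proof
  interpret \<nu>: sigma_finite_measure \<nu> by fact
  fix C assume "C \<in> null_sets (\<mu> \<Otimes>\<^sub>M \<nu>)"
  then have C: "C \<in> sets (\<mu> \<Otimes>\<^sub>M \<nu>)" and "(\<integral>\<^sup>+x. emeasure \<nu> (Pair x -` C) \<partial>\<mu>) = 0"
    using \<nu>.emeasure_pair_measure_alt[of C \<mu>] by (auto simp: null_sets_def)
  then have "AE x in \<mu>. emeasure \<nu> (Pair x -` C) = 0"
    by (simp add: nn_integral_0_iff_AE \<nu>.measurable_emeasure_Pair)
  then have "AE x in \<mu>'. emeasure \<nu> (Pair x -` C) = 0"
    using absolutely_continuous_AE[OF assms(3,2)] by blast
  moreover have "C \<in> sets (\<mu>' \<Otimes>\<^sub>M \<nu>)"
    using C assms(3) by (simp cong: sets_pair_measure_cong)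
  ultimately show "C \<in> null_sets (\<mu>' \<Otimes>\<^sub>M \<nu>)"
    by (auto simp: \<nu>.emeasure_pair_measure_alt nn_integral_0_iff_AE \<nu>.measurable_emeasure_Pair)
qed

lemma (in prob_space) indep_var_distr_compose_swap:
  assumes indep: "indep_var S X T Y" and g: "g \<in> T \<rightarrow>\<^sub>M T'"
  shows "distr M T' (\<lambda>\<omega>. g (Y \<omega>)) \<Otimes>\<^sub>M distr M S X = distr M (T' \<Otimes>\<^sub>M S) (\<lambda>\<omega>. (g (Y \<omega>), X \<omega>))"
proof (rule pair_measure_eqI)
  have X: "X \<in> M \<rightarrow>\<^sub>M S" and Y: "Y \<in> M \<rightarrow>\<^sub>M T"
    using indep by (rule indep_var_rv1, rule indep_var_rv2)
  note [measurable] = X Y g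
  show "sigma_finite_measure (distr M T' (\<lambda>\<omega>. g (Y \<omega>)))" "sigma_finite_measure (distr M S X)"
    by (auto intro!: prob_space_imp_sigma_finite prob_space_distr)
  show "sets (distr M T' (\<lambda>\<omega>. g (Y \<omega>)) \<Otimes>\<^sub>M distr M S X) = sets (distr M (T' \<Otimes>\<^sub>M S) (\<lambda>\<omega>. (g (Y \<omega>), X \<omega>)))"
    by (simp cong: sets_pair_measure_cong)
  fix A B assume "A \<in> sets (distr M T' (\<lambda>\<omega>. g (Y \<omega>)))" "B \<in> sets (distr M S X)"
  then have A[measurable]: "A \<in> sets T'" and B[measurable]: "B \<in> sets S"
    by simp_all
  have "emeasure (distr M (T' \<Otimes>\<^sub>M S) (\<lambda>\<omega>. (g (Y \<omega>), X \<omega>))) (A \<times> B)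
      = prob ((\<lambda>\<omega>. (X \<omega>, Y \<omega>)) -` (B \<times> (g -` A \<inter> space T)) \<inter> space M)"
    by (auto simp: emeasure_distr emeasure_eq_measure intro!: arg_cong[where f=prob] measurable_space[OF Y])
  also have "\<dots> = prob (X -` B \<inter> space M) * prob (Y -` (g -` A \<inter> space T) \<inter> space M)"
    using indep_varD[OF indep B measurable_sets[OF g A]] by simp
  also have "\<dots> = emeasure (distr M S X) B * emeasure (distr M T' (\<lambda>\<omega>. g (Y \<omega>))) A"
    by (auto simp: emeasure_distr emeasure_eq_measure ennreal_mult intro!: arg_cong2[where f="(*)"] arg_cong[where f=prob] measurable_space[OF Y])
  finally show "emeasure (distr M T' (\<lambda>\<omega>. g (Y \<omega>))) A * emeasure (distr M S X) B
      = emeasure (distr M (T' \<Otimes>\<^sub>M S) (\<lambda>\<omega>. (g (Y \<omega>), X \<omega>))) (A \<times> B)"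
    by (simp add: mult.commute)
qed

lemma absolutely_continuous_restricted_joint_distr:
  fixes U :: "'i::countable \<Rightarrow> 'a \<Rightarrow> 'b"
  assumes T: "T \<in> M \<rightarrow>\<^sub>M S" and W: "W \<in> M \<rightarrow>\<^sub>M N" and U: "\<And>j. U j \<in> M \<rightarrow>\<^sub>M S"
    and A: "A \<in> sets S"
    and cover: "AE \<omega> in M. T \<omega> \<in> A \<longrightarrow> (\<exists>j. T \<omega> = U j \<omega>)"
    and sets_\<rho>: "sets \<rho> = sets (S \<Otimes>\<^sub>M N)"
    and ac: "\<And>j. absolutely_continuous \<rho> (distr M (S \<Otimes>\<^sub>M N) (\<lambda>\<omega>. (U j \<omega>, W \<omega>)))"
  shows "absolutely_continuous \<rho>
           (density (distr M (S \<Otimes>\<^sub>M N) (\<lambda>\<omega>. (T \<omega>, W \<omega>))) (indicator (A \<times> space N)))"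
  unfolding absolutely_continuous_def
proof
  note [measurable] = T W U A
  fix C assume C_null: "C \<in> null_sets \<rho>"
  then have C[measurable]: "C \<in> sets (S \<Otimes>\<^sub>M N)"
    using sets_\<rho> by auto
  have null: "(\<lambda>\<omega>. (U j \<omega>, W \<omega>)) -` C \<inter> space M \<in> null_sets M" for j
    using ac[of j] C_null by (auto simp: absolutely_continuous_def null_sets_distr_iff)
  have "AE \<omega> in M. (U j \<omega>, W \<omega>) \<notin> C" for j
    using AE_not_in[OF null[of j]] AE_space[of M] by eventually_elim auto
  then have "AE \<omega> in M. \<forall>j. (U j \<omega>, W \<omega>) \<notin> C"
    by (simp add: AE_all_countable)
  with cover have "AE \<omega> in M. (T \<omega>, W \<omega>) \<in> A \<times> space N \<longrightarrow> (T \<omega>, W \<omega>) \<notin> C"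
    by eventually_elim auto
  then show "C \<in> null_sets (density (distr M (S \<Otimes>\<^sub>M N) (\<lambda>\<omega>. (T \<omega>, W \<omega>))) (indicator (A \<times> space N)))"
    by (simp add: null_sets_density_iff AE_distr_iff split: split_indicator)
qed

lemma (in prob_space) ex_dominating_restricted_joint_distr:
  fixes V :: "'a \<Rightarrow> nat \<Rightarrow> 'b"
  assumes indep: "indep_var N W (Pi\<^sub>M UNIV (\<lambda>_. S)) V"
    and T: "T \<in> M \<rightarrow>\<^sub>M S" and A: "A \<in> sets S"
    and cover: "AE \<omega> in M. T \<omega> \<in> A \<longrightarrow> (\<exists>j. T \<omega> = V \<omega> j)"
  obtains \<mu> where "prob_space \<mu>" "sets \<mu> = sets S"
    "absolutely_continuous (\<mu> \<Otimes>\<^sub>M distr M N W)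
       (density (distr M (S \<Otimes>\<^sub>M N) (\<lambda>\<omega>. (T \<omega>, W \<omega>))) (indicator (A \<times> space N)))"
proof -
  have W: "W \<in> M \<rightarrow>\<^sub>M N" and V: "V \<in> M \<rightarrow>\<^sub>M Pi\<^sub>M UNIV (\<lambda>_. S)"
    using indep by (rule indep_var_rv1, rule indep_var_rv2)
  have V_j: "(\<lambda>\<omega>. V \<omega> j) \<in> M \<rightarrow>\<^sub>M S" for j
    using V by measurable
  have law_j: "distr M S (\<lambda>\<omega>. V \<omega> j) \<Otimes>\<^sub>M distr M N W = distr M (S \<Otimes>\<^sub>M N) (\<lambda>\<omega>. (V \<omega> j, W \<omega>))" for j
    using indep_var_distr_compose_swap[OF indep measurable_component_singleton[of j UNIV]] by simp
  obtain \<mu> where \<mu>: "prob_space \<mu>" "sets \<mu> = sets S" "\<And>j. absolutely_continuous \<mu> (distr M S (\<lambda>\<omega>. V \<omega> j))"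
    by (rule ex_dominating_prob_space[of "\<lambda>j. distr M S (\<lambda>\<omega>. V \<omega> j)" S]) (auto intro: prob_space_distr V_j)
  have "sigma_finite_measure (distr M N W)"
    using W by (intro prob_space_imp_sigma_finite prob_space_distr)
  then have ac_j: "absolutely_continuous (\<mu> \<Otimes>\<^sub>M distr M N W) (distr M (S \<Otimes>\<^sub>M N) (\<lambda>\<omega>. (V \<omega> j, W \<omega>)))" for j
    unfolding law_j[symmetric] using \<mu>(2,3) V_j by (intro absolutely_continuous_pair_measure_fst) simp_all
  have "sets (\<mu> \<Otimes>\<^sub>M distr M N W) = sets (S \<Otimes>\<^sub>M N)"
    using \<mu>(2) by (intro sets_pair_measure_cong) simp_all
  then show ?thesis
    by (intro that[OF \<mu>(1,2)] absolutely_continuous_restricted_joint_distr[OF T W V_j A cover _ ac_j])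
qed

lemma emeasure_density_pair_measure_Times:
  assumes \<nu>: "sigma_finite_measure \<nu>" and f: "f \<in> borel_measurable (\<mu> \<Otimes>\<^sub>M \<nu>)"
    and A: "A \<in> sets \<mu>" and B: "B \<in> sets \<nu>"
  shows "emeasure (density (\<mu> \<Otimes>\<^sub>M \<nu>) f) (A \<times> B)
       = (\<integral>\<^sup>+x. indicator A x * (\<integral>\<^sup>+w. f (x, w) * indicator B w \<partial>\<nu>) \<partial>\<mu>)"
proof -
  interpret \<nu>: sigma_finite_measure \<nu> by (rule \<nu>)
  have "emeasure (density (\<mu> \<Otimes>\<^sub>M \<nu>) f) (A \<times> B) = (\<integral>\<^sup>+z. f z * indicator (A \<times> B) z \<partial>(\<mu> \<Otimes>\<^sub>M \<nu>))"
    using A B f by (subst emeasure_density) auto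
  also have "\<dots> = (\<integral>\<^sup>+x. \<integral>\<^sup>+w. f (x, w) * indicator (A \<times> B) (x, w) \<partial>\<nu> \<partial>\<mu>)"
    using A B f by (subst \<nu>.nn_integral_fst[symmetric]) auto
  also have "\<dots> = (\<integral>\<^sup>+x. indicator A x * (\<integral>\<^sup>+w. f (x, w) * indicator B w \<partial>\<nu>) \<partial>\<mu>)"
    by (intro nn_integral_cong) (simp add: indicator_times split: split_indicator)
  finally show ?thesis .
qed

lemma marginal_eq_density_of_joint_density:
  assumes \<nu>: "sigma_finite_measure \<nu>" and f: "f \<in> borel_measurable (\<mu> \<Otimes>\<^sub>M \<nu>)"
    and K: "K \<in> \<mu> \<rightarrow>\<^sub>M prob_algebra \<nu>"
    and sets_Q: "sets Q = sets \<mu>"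
    and disint: "\<And>A B. A \<in> sets \<mu> \<Longrightarrow> B \<in> sets \<nu> \<Longrightarrow>
       emeasure (density (\<mu> \<Otimes>\<^sub>M \<nu>) f) (A \<times> B) = (\<integral>\<^sup>+x. indicator A x * emeasure (K x) B \<partial>Q)"
  shows "Q = density \<mu> (\<lambda>x. \<integral>\<^sup>+w. f (x, w) \<partial>\<nu>)"
proof (rule measure_eqI)
  interpret \<nu>: sigma_finite_measure \<nu> by (rule \<nu>)
  have K_space: "emeasure (K x) (space \<nu>) = 1" if "x \<in> space \<mu>" for x
  proof -
    have "prob_space (K x)" and "sets (K x) = sets \<nu>"
      using measurable_space[OF K that] by (auto simp: space_prob_algebra)
    then show ?thesis
      using prob_space.emeasure_space_1 sets_eq_imp_space_eq by metis
  qed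
  fix A assume "A \<in> sets Q"
  then have A: "A \<in> sets \<mu>" by (simp add: sets_Q)
  have inner: "(\<integral>\<^sup>+w. f (x, w) * indicator (space \<nu>) w \<partial>\<nu>) = (\<integral>\<^sup>+w. f (x, w) \<partial>\<nu>)" for x
    by (auto intro!: nn_integral_cong)
  have "emeasure Q A = (\<integral>\<^sup>+x. indicator A x \<partial>Q)"
    using A sets_Q by simp
  also have "\<dots> = (\<integral>\<^sup>+x. indicator A x * emeasure (K x) (space \<nu>) \<partial>Q)"
    by (intro nn_integral_cong) (simp add: K_space sets_eq_imp_space_eq[OF sets_Q])
  also have "\<dots> = (\<integral>\<^sup>+x. indicator A x * (\<integral>\<^sup>+w. f (x, w) \<partial>\<nu>) \<partial>\<mu>)"
    using A by (simp add: disint[symmetric] emeasure_density_pair_measure_Times[OF \<nu> f] inner)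
  also have "\<dots> = emeasure (density \<mu> (\<lambda>x. \<integral>\<^sup>+w. f (x, w) \<partial>\<nu>)) A"
    using A \<nu>.borel_measurable_nn_integral_fst[OF f] by (simp add: emeasure_density mult.commute)
  finally show "emeasure Q A = emeasure (density \<mu> (\<lambda>x. \<integral>\<^sup>+w. f (x, w) \<partial>\<nu>)) A" .
qed (simp add: sets_Q)

lemma AE_kernel_of_joint_density:
  assumes \<mu>: "sigma_finite_measure \<mu>" and \<nu>: "sigma_finite_measure \<nu>"
    and f: "f \<in> borel_measurable (\<mu> \<Otimes>\<^sub>M \<nu>)"
    and K: "K \<in> \<mu> \<rightarrow>\<^sub>M prob_algebra \<nu>"
    and sets_Q: "sets Q = sets \<mu>"
    and disint: "\<And>A B. A \<in> sets \<mu> \<Longrightarrow> B \<in> sets \<nu> \<Longrightarrow>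
       emeasure (density (\<mu> \<Otimes>\<^sub>M \<nu>) f) (A \<times> B) = (\<integral>\<^sup>+x. indicator A x * emeasure (K x) B \<partial>Q)"
    and B: "B \<in> sets \<nu>"
  shows "AE x in \<mu>. (\<integral>\<^sup>+w. f (x, w) \<partial>\<nu>) * emeasure (K x) B = (\<integral>\<^sup>+w. f (x, w) * indicator B w \<partial>\<nu>)"
proof -
  interpret \<mu>: sigma_finite_measure \<mu> by (rule \<mu>)
  interpret \<nu>: sigma_finite_measure \<nu> by (rule \<nu>)
  define F where "F = (\<lambda>x. \<integral>\<^sup>+w. f (x, w) \<partial>\<nu>)"
  define G where "G = (\<lambda>x. \<integral>\<^sup>+w. f (x, w) * indicator B w \<partial>\<nu>)"
  have F_meas: "F \<in> borel_measurable \<mu>"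
    unfolding F_def by (rule \<nu>.borel_measurable_nn_integral_fst[OF f])
  have "(\<lambda>z. f z * indicator B (snd z)) \<in> borel_measurable (\<mu> \<Otimes>\<^sub>M \<nu>)"
    using B f by measurable
  from \<nu>.borel_measurable_nn_integral_fst[OF this] have G_meas: "G \<in> borel_measurable \<mu>"
    by (simp add: G_def)
  have K_meas: "(\<lambda>x. emeasure (K x) B) \<in> borel_measurable \<mu>"
    using B by (intro measurable_compose[OF measurable_prob_algebraD[OF K] measurable_emeasure_subprob_algebra])
  have Q_eq: "Q = density \<mu> F"
    unfolding F_def by (rule marginal_eq_density_of_joint_density[OF \<nu> f K sets_Q]) (rule disint)
  have "density \<mu> (\<lambda>x. F x * emeasure (K x) B) = density \<mu> G"
  proof (rule measure_eqI)
    fix A assume "A \<in> sets (density \<mu> (\<lambda>x. F x * emeasure (K x) B))"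
    then have A: "A \<in> sets \<mu>" by simp
    have "emeasure (density \<mu> (\<lambda>x. F x * emeasure (K x) B)) A
        = (\<integral>\<^sup>+x. F x * (indicator A x * emeasure (K x) B) \<partial>\<mu>)"
      using A F_meas K_meas by (simp add: emeasure_density mult_ac)
    also have "\<dots> = (\<integral>\<^sup>+x. indicator A x * emeasure (K x) B \<partial>Q)"
      using A F_meas K_meas by (simp add: Q_eq nn_integral_density)
    also have "\<dots> = emeasure (density \<mu> G) A"
      using A B G_meas
      by (simp add: disint[symmetric] emeasure_density_pair_measure_Times[OF \<nu> f] emeasure_density
          G_def mult.commute)
    finally show "emeasure (density \<mu> (\<lambda>x. F x * emeasure (K x) B)) A = emeasure (density \<mu> G) A" .
  qed simp
  with F_meas K_meas G_meas have "AE x in \<mu>. F x * emeasure (K x) B = G x"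
    by (intro \<mu>.density_unique) auto
  then show ?thesis
    by (simp add: F_def G_def)
qed

lemma AE_absolutely_continuous_kernel_density:
  fixes \<mu> :: "'a measure" and \<nu> :: "'b measure"
  assumes \<mu>: "sigma_finite_measure \<mu>" and \<nu>: "sigma_finite_measure \<nu>"
    and G: "countable G" "Int_stable G" "space \<nu> \<in> G" "sets \<nu> = sigma_sets (space \<nu>) G"
    and f: "f \<in> borel_measurable (\<mu> \<Otimes>\<^sub>M \<nu>)"
    and K: "K \<in> \<mu> \<rightarrow>\<^sub>M prob_algebra \<nu>"
    and Q: "sets Q = sets \<mu>" "finite_measure Q"
    and disint: "\<And>A B. A \<in> sets \<mu> \<Longrightarrow> B \<in> sets \<nu> \<Longrightarrow>
       emeasure (density (\<mu> \<Otimes>\<^sub>M \<nu>) f) (A \<times> B) = (\<integral>\<^sup>+x. indicator A x * emeasure (K x) B \<partial>Q)"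
  shows "AE x in Q. absolutely_continuous \<nu> (K x)"
proof -
  interpret \<nu>: sigma_finite_measure \<nu> by (rule \<nu>)
  define F where "F = (\<lambda>x. \<integral>\<^sup>+w. f (x, w) \<partial>\<nu>)"
  have F_meas: "F \<in> borel_measurable \<mu>"
    unfolding F_def by (rule \<nu>.borel_measurable_nn_integral_fst[OF f])
  have Q_eq: "Q = density \<mu> F"
    unfolding F_def by (rule marginal_eq_density_of_joint_density[OF \<nu> f K Q(1)]) (rule disint)
  have ac_at: "absolutely_continuous \<nu> (K x)"
    if x: "x \<in> space \<mu>" and F_x: "0 < F x" "F x \<noteq> \<infinity>"
      and eq: "\<forall>B\<in>G. F x * emeasure (K x) B = (\<integral>\<^sup>+w. f (x, w) * indicator B w \<partial>\<nu>)" for x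
  proof (rule absolutely_continuousI_density_generator[where c="F x" and g="\<lambda>w. f (x, w)", OF G(2-4)])
    show "finite_measure (K x)" "sets (K x) = sets \<nu>"
      using measurable_space[OF K x] by (auto simp: space_prob_algebra prob_space_def)
    show "(\<lambda>w. f (x, w)) \<in> borel_measurable \<nu>"
      using measurable_Pair2[OF f x] .
  qed (use F_x eq in simp_all)
  have "AE x in \<mu>. \<forall>B\<in>G. F x * emeasure (K x) B = (\<integral>\<^sup>+w. f (x, w) * indicator B w \<partial>\<nu>)"
  proof (rule AE_ball_countable'[OF _ G(1)])
    fix B assume "B \<in> G"
    then have B: "B \<in> sets \<nu>"
      unfolding G(4) by (rule sigma_sets.Basic)
    show "AE x in \<mu>. F x * emeasure (K x) B = (\<integral>\<^sup>+w. f (x, w) * indicator B w \<partial>\<nu>)"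
      unfolding F_def by (rule AE_kernel_of_joint_density[OF \<mu> \<nu> f K Q(1) _ B]) (rule disint)
  qed
  moreover have "AE x in \<mu>. F x \<noteq> \<infinity>"
  proof (rule nn_integral_PInf_AE[OF F_meas])
    have "integral\<^sup>N \<mu> F = emeasure Q (space Q)"
      unfolding Q_eq using F_meas by (subst emeasure_density) (auto intro!: nn_integral_cong)
    then show "integral\<^sup>N \<mu> F \<noteq> \<infinity>"
      using finite_measure.emeasure_finite[OF Q(2)] by simp
  qed
  ultimately have "AE x in \<mu>. 0 < F x \<longrightarrow> absolutely_continuous \<nu> (K x)"
    using AE_space by eventually_elim (simp add: ac_at)
  then show ?thesis
    unfolding Q_eq by (simp add: AE_density[OF F_meas])
qed

lemma AE_absolutely_continuous_kernel:
  fixes \<mu> :: "'a measure" and \<nu> :: "'b measure"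
  assumes \<mu>: "sigma_finite_measure \<mu>" and \<nu>: "sigma_finite_measure \<nu>"
    and G: "countable G" "Int_stable G" "space \<nu> \<in> G" "sets \<nu> = sigma_sets (space \<nu>) G"
    and K: "K \<in> \<mu> \<rightarrow>\<^sub>M prob_algebra \<nu>"
    and \<pi>: "sets \<pi> = sets (\<mu> \<Otimes>\<^sub>M \<nu>)" "absolutely_continuous (\<mu> \<Otimes>\<^sub>M \<nu>) \<pi>"
    and Q: "sets Q = sets \<mu>" "finite_measure Q"
    and disint: "\<And>A B. A \<in> sets \<mu> \<Longrightarrow> B \<in> sets \<nu> \<Longrightarrow>
       emeasure \<pi> (A \<times> B) = (\<integral>\<^sup>+x. indicator A x * emeasure (K x) B \<partial>Q)"
  shows "AE x in Q. absolutely_continuous \<nu> (K x)"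
proof -
  interpret pair_sigma_finite \<mu> \<nu>
    using \<mu> \<nu> by (rule pair_sigma_finite.intro)
  obtain f where f: "f \<in> borel_measurable (\<mu> \<Otimes>\<^sub>M \<nu>)" and \<pi>_eq: "density (\<mu> \<Otimes>\<^sub>M \<nu>) f = \<pi>"
    using Radon_Nikodym[OF \<pi>(2,1)] by blast
  show ?thesis
    by (rule AE_absolutely_continuous_kernel_density[OF \<mu> \<nu> G f K Q]) (simp add: \<pi>_eq disint)
qed

lemma emeasure_restricted_joint_distr_Times:
  assumes K: "cond_distr_kernel M X N Z K"
    and X: "X \<in> borel_measurable M" and Z: "Z \<in> M \<rightarrow>\<^sub>M N"
    and A: "A \<in> sets borel" and A': "A' \<in> sets borel" and B: "B \<in> sets N"
  shows "emeasure (density (distr M (borel \<Otimes>\<^sub>M N) (\<lambda>\<omega>. (X \<omega>, Z \<omega>))) (indicator (A \<times> space N)))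
           (A' \<times> B)
       = (\<integral>\<^sup>+x. indicator A' x * emeasure (K x) B \<partial>density (distr M borel X) (indicator A))"
proof -
  note [measurable] = X Z A A' B
  have disint: "\<And>A B. A \<in> sets borel \<Longrightarrow> B \<in> sets N \<Longrightarrow>
      emeasure M {\<omega> \<in> space M. X \<omega> \<in> A \<and> Z \<omega> \<in> B}
        = (\<integral>\<^sup>+x. indicator A x * emeasure (K x) B \<partial>distr M borel X)"
    using K unfolding cond_distr_kernel_def by blast
  have K_meas: "(\<lambda>x. emeasure (K x) B) \<in> borel_measurable borel"
    using K B unfolding cond_distr_kernel_def
    by (auto intro: measurable_compose[OF measurable_prob_algebraD measurable_emeasure_subprob_algebra])
  have "indicator (A \<times> space N) z * indicator (A' \<times> B) z = (indicator ((A' \<inter> A) \<times> B) z :: ennreal)" for z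
    using sets.sets_into_space[OF B] by (auto split: split_indicator)
  then have "emeasure (density (distr M (borel \<Otimes>\<^sub>M N) (\<lambda>\<omega>. (X \<omega>, Z \<omega>))) (indicator (A \<times> space N)))
           (A' \<times> B)
      = emeasure (distr M (borel \<Otimes>\<^sub>M N) (\<lambda>\<omega>. (X \<omega>, Z \<omega>))) ((A' \<inter> A) \<times> B)"
    by (simp add: emeasure_density)
  also have "\<dots> = emeasure M {\<omega> \<in> space M. X \<omega> \<in> A' \<inter> A \<and> Z \<omega> \<in> B}"
    by (simp add: emeasure_distr vimage_def Int_def conj_commute)
  also have "\<dots> = (\<integral>\<^sup>+x. indicator (A' \<inter> A) x * emeasure (K x) B \<partial>distr M borel X)"
    using A A' B by (intro disint) auto
  also have "\<dots> = (\<integral>\<^sup>+x. indicator A' x * emeasure (K x) B \<partial>density (distr M borel X) (indicator A))"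
    using K_meas by (simp add: nn_integral_density indicator_inter_arith mult_ac)
  finally show ?thesis .
qed

lemma AE_absolutely_continuous_cond_distr_kernel:
  fixes X :: "'a \<Rightarrow> real" and Z :: "'a \<Rightarrow> 'b::second_countable_topology"
  assumes M: "prob_space M" and K: "cond_distr_kernel M X N Z K"
    and X: "X \<in> borel_measurable M" and Z: "Z \<in> M \<rightarrow>\<^sub>M N" and sets_N: "sets N = sets borel"
    and A: "A \<in> sets borel"
    and \<mu>: "prob_space \<mu>" "sets \<mu> = sets borel"
    and ac: "absolutely_continuous (\<mu> \<Otimes>\<^sub>M distr M N Z)
       (density (distr M (borel \<Otimes>\<^sub>M N) (\<lambda>\<omega>. (X \<omega>, Z \<omega>))) (indicator (A \<times> space N)))"
  shows "AE x in distr M borel X. x \<in> A \<longrightarrow> absolutely_continuous (distr M N Z) (K x)"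
proof -
  interpret prob_space M by (rule M)
  obtain G :: "'b set set" where G: "countable G" "Int_stable G" "UNIV \<in> G" "sets borel = sigma_sets UNIV G"
    by (rule countable_Int_stable_generator_borel)
  have space_N: "space N = UNIV"
    using sets_eq_imp_space_eq[OF sets_N] by simp
  have "AE x in density (distr M borel X) (indicator A). absolutely_continuous (distr M N Z) (K x)"
  proof (rule AE_absolutely_continuous_kernel[where G=G and \<mu>=\<mu>])
    show "sigma_finite_measure \<mu>" "sigma_finite_measure (distr M N Z)"
      using \<mu>(1) Z by (auto intro: prob_space_imp_sigma_finite prob_space_distr)
    show "countable G" "Int_stable G" by (fact G)+
    show "space (distr M N Z) \<in> G" "sets (distr M N Z) = sigma_sets (space (distr M N Z)) G"
      using G space_N sets_N by simp_all
    have "prob_algebra (distr M N Z) = prob_algebra N"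
      by (simp add: prob_algebra_def cong: subprob_algebra_cong)
    moreover have "K \<in> borel \<rightarrow>\<^sub>M prob_algebra N"
      using K by (simp add: cond_distr_kernel_def)
    ultimately show "K \<in> \<mu> \<rightarrow>\<^sub>M prob_algebra (distr M N Z)"
      by (simp add: measurable_cong_sets[OF \<mu>(2) refl])
    show "finite_measure (density (distr M borel X) (indicator A))"
      using prob_space_distr[OF X] A
      by (intro finite_measure.finite_measure_restricted) (auto simp: prob_space_def)
  qed (use ac \<mu>(2) in \<open>auto simp: emeasure_restricted_joint_distr_Times[OF K X Z A] cong: sets_pair_measure_cong\<close>)
  then have "AE x in distr M borel X. 0 < (indicator A x :: ennreal) \<longrightarrow> absolutely_continuous (distr M N Z) (K x)"
    using A by (simp add: AE_density)
  then show ?thesis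
    by eventually_elim (simp split: split_indicator)
qed

lemma AE_eq_even_term_if_below_half:
  fixes X Y :: "nat \<Rightarrow> 'a \<Rightarrow> real"
  assumes Y_eq: "AE \<omega> in M. range (\<lambda>i. Y i \<omega>) = range (\<lambda>i. X i \<omega>)"
    and Y_even: "\<And>k. AE \<omega> in M. Y (2 * k + 1) \<omega> \<ge> 1 / 2"
  shows "AE \<omega> in M. X 0 \<omega> < 1 / 2 \<longrightarrow> (\<exists>j. X 0 \<omega> = Y (2 * j) \<omega>)"
proof -
  have "AE \<omega> in M. \<forall>k. Y (2 * k + 1) \<omega> \<ge> 1 / 2"
    using Y_even by (simp add: AE_all_countable)
  with Y_eq show ?thesis
  proof eventually_elim
    case (elim \<omega>)
    show ?case
    proof
      assume below: "X 0 \<omega> < 1 / 2"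
      obtain i where i: "X 0 \<omega> = Y i \<omega>"
        using elim(1) by (metis (mono_tags, lifting) rangeE rangeI)
      show "\<exists>j. X 0 \<omega> = Y (2 * j) \<omega>"
      proof (cases "even i")
        case False
        then obtain k where "i = 2 * k + 1" by (rule oddE)
        moreover have "Y (2 * k + 1) \<omega> \<ge> 1 / 2"
          using elim(2) by blast
        ultimately show ?thesis
          using i below by simp
      qed (use i in \<open>auto elim: evenE\<close>)
    qed
  qed
qed

theorem proposition5p2:
  fixes M :: "'a measure"
    and X Y :: "nat \<Rightarrow> 'a \<Rightarrow> real"
    and K :: "real \<Rightarrow> (nat \<Rightarrow> real) measure"
  assumes "prob_space M"
    and X_meas: "\<And>i. X i \<in> borel_measurable M"
    and X_range: "\<And>i \<omega>. \<omega> \<in> space M \<Longrightarrow> X i \<omega> \<in> {0<..<1}"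
    and X_dense: "AE \<omega> in M. {0<..<1} \<subseteq> closure (range (\<lambda>i. X i \<omega>))"
    and Y_meas: "\<And>i. Y i \<in> borel_measurable M"
    and Y_range: "\<And>i \<omega>. \<omega> \<in> space M \<Longrightarrow> Y i \<omega> \<in> {0<..<1}"
    and Y_eq: "AE \<omega> in M. range (\<lambda>i. Y i \<omega>) = range (\<lambda>i. X i \<omega>)"
    and Y_odd: "\<And>k. AE \<omega> in M. Y (2 * k) \<omega> < 1 / 2"
    and Y_even: "\<And>k. AE \<omega> in M. Y (2 * k + 1) \<omega> \<ge> 1 / 2"
    and indep: "prob_space.indep_var M
                  seq_space (\<lambda>\<omega> k. Y (2 * k + 1) \<omega>)
                  seq_space (\<lambda>\<omega> k. Y (2 * k) \<omega>)"
    and pos: "measure M {\<omega> \<in> space M. X 0 \<omega> < 1 / 2} > 0"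
    and K: "cond_distr_kernel M (X 0) seq_space (\<lambda>\<omega> k. Y (2 * k + 1) \<omega>) K"
  shows "AE x in distr M borel (X 0).
           x \<in> {0<..<1 / 2} \<longrightarrow>
           absolutely_continuous (distr M seq_space (\<lambda>\<omega> k. Y (2 * k + 1) \<omega>)) (K x)"
proof -
  interpret prob_space M by fact
  note [measurable] = X_meas Y_meas
  have cover: "AE \<omega> in M. X 0 \<omega> \<in> {0<..<1 / 2} \<longrightarrow> (\<exists>j. X 0 \<omega> = Y (2 * j) \<omega>)"
    using AE_eq_even_term_if_below_half[OF Y_eq Y_even] by auto
  obtain \<mu> where "prob_space \<mu>" "sets \<mu> = sets borel"
    "absolutely_continuous (\<mu> \<Otimes>\<^sub>M distr M seq_space (\<lambda>\<omega> k. Y (2 * k + 1) \<omega>))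
       (density (distr M (borel \<Otimes>\<^sub>M seq_space) (\<lambda>\<omega>. (X 0 \<omega>, \<lambda>k. Y (2 * k + 1) \<omega>)))
          (indicator ({0<..<1 / 2} \<times> space seq_space)))"
    by (rule ex_dominating_restricted_joint_distr[OF indep _ _ cover]) auto
  then show ?thesis
    by (intro AE_absolutely_continuous_cond_distr_kernel[OF \<open>prob_space M\<close> K X_meas indep_var_rv1[OF indep]])
      (auto simp: sets_PiM_equal_borel)
qed

end
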